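(* For every bipartite state $\rho_{AB}$ that is PPT across $A:B$, $S^\downarrow_\infty(A|B)_\rho\ge0$.
   Context: $\log$ base 2; all systems finite-dimensional. $D_\infty(\rho\|\sigma):=\log\inf\{\lambda\ge0:\rho\le\lambda\sigma\}$; $S^\downarrow_\infty(A|B)_\rho:=-D_\infty(\rho_{AB}\|\mathbb 1_A\otimes\rho_B)$ with $\rho_B=\operatorname{tr}_A\rho_{AB}$. A state is PPT across $A:B$ if its partial transpose on $B$ is positive semidefinite. *)

theory Defs
  imports "HOL-Analysis.Analysis"
begin

text \<open>Operators on a finite-dimensional Hilbert space with orthonormal basis indexed by a
finite type 'i are represented by their matrices 'i => 'i => complex.
A bipartite system A:B has basis index type 'a * 'b.\<close>

type_synonym 'i op = "'i \<Rightarrow> 'i \<Rightarrow> complex"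

definition qform :: "('i::finite) op \<Rightarrow> ('i \<Rightarrow> complex) \<Rightarrow> complex" where
  "qform M v = (\<Sum>i\<in>UNIV. \<Sum>j\<in>UNIV. cnj (v i) * M i j * v j)"

definition psd :: "('i::finite) op \<Rightarrow> bool" where
  "psd M \<longleftrightarrow> (\<forall>v. Im (qform M v) = 0 \<and> Re (qform M v) \<ge> 0)"

definition loewner_le :: "('i::finite) op \<Rightarrow> 'i op \<Rightarrow> bool" where
  "loewner_le X Y \<longleftrightarrow> psd (\<lambda>i j. Y i j - X i j)"

definition trace :: "('i::finite) op \<Rightarrow> complex" where
  "trace M = (\<Sum>i\<in>UNIV. M i i)"

definition density_op :: "('i::finite) op \<Rightarrow> bool" where
  "density_op \<rho> \<longleftrightarrow> psd \<rho> \<and> trace \<rho> = 1"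

definition ptransB :: "('a::finite \<times> 'b::finite) op \<Rightarrow> ('a \<times> 'b) op" where
  "ptransB \<rho> = (\<lambda>(a, b) (a', b'). \<rho> (a, b') (a', b))"

definition PPT :: "('a::finite \<times> 'b::finite) op \<Rightarrow> bool" where
  "PPT \<rho> \<longleftrightarrow> psd (ptransB \<rho>)"

definition ptraceA :: "('a::finite \<times> 'b::finite) op \<Rightarrow> 'b op" where
  "ptraceA \<rho> = (\<lambda>b b'. \<Sum>a\<in>UNIV. \<rho> (a, b) (a, b'))"

definition idA_tensor :: "'b::finite op \<Rightarrow> ('a::finite \<times> 'b) op" where
  "idA_tensor \<sigma> = (\<lambda>(a, b) (a', b'). if a = a' then \<sigma> b b' else 0)"

text \<open>Max-relative entropy D_infty(rho||sigma) = log2 inf {lambda >= 0. rho <= lambda sigma},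
with values in the extended reals (inf of the empty set = +infinity, log 0 = -infinity).\<close>
definition D_max :: "('i::finite) op \<Rightarrow> 'i op \<Rightarrow> ereal" where
  "D_max \<rho> \<sigma> =
    (let L = {t::real. t \<ge> 0 \<and> loewner_le \<rho> (\<lambda>i j. complex_of_real t * \<sigma> i j)} in
     if L = {} then \<infinity> else if Inf L = 0 then -\<infinity> else ereal (log 2 (Inf L)))"

definition S_down_inf :: "('a::finite \<times> 'b::finite) op \<Rightarrow> ereal" where
  "S_down_inf \<rho> = - D_max \<rho> (idA_tensor (ptraceA \<rho>))"

end

(*
  PPT implies the reduction criterion rho <= 1_A (x) rho_B, so t = 1 is feasible in the infimum
  defining D_infty(rho || 1_A (x) rho_B), which is therefore at most 0.

  The reduction criterion holds because the reduction map X |-> tr(X) 1 - X is, up to a factor 2,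
  transposition followed by the completely positive map with Kraus operators |a><c| - |c><a|.
  Concretely, with v_a = v(a, -) and w_ac = |c> (x) conj v_a - |a> (x) conj v_c,
    sum_{a,c} <w_ac, rho^{T_B} w_ac> = 2 <v, (1_A (x) rho_B - rho) v>,
  and every summand on the left is nonnegative.
*)
theory Submission
  imports Defs
begin

lemma sum_UNIV_prod:
  "(\<Sum>p\<in>UNIV. f p) = (\<Sum>x\<in>UNIV. \<Sum>y\<in>UNIV. f (x, y))"
  by (simp add: sum.cartesian_product)

lemma sum_rotate3:
  "(\<Sum>x\<in>A. \<Sum>y\<in>B. \<Sum>z\<in>C. f x y z) = (\<Sum>y\<in>B. \<Sum>z\<in>C. \<Sum>x\<in>A. f x y z)"
  by (subst sum.swap) (rule sum.cong[OF refl], rule sum.swap)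

definition sesq_form :: "('i::finite) op \<Rightarrow> ('i \<Rightarrow> complex) \<Rightarrow> ('i \<Rightarrow> complex) \<Rightarrow> complex" where
  "sesq_form M u w = (\<Sum>i\<in>UNIV. \<Sum>j\<in>UNIV. cnj (u i) * M i j * w j)"

lemma qform_eq_sesq_form: "qform M v = sesq_form M v v"
  by (simp add: qform_def sesq_form_def)

lemma qform_diff_vec:
  "qform M (\<lambda>i. u i - w i) = qform M u - sesq_form M u w - sesq_form M w u + qform M w"
  by (simp add: qform_def sesq_form_def algebra_simps sum_subtractf sum.distrib)

lemma qform_diff_op: "qform (\<lambda>i j. M i j - N i j) v = qform M v - qform N v"
  by (simp add: qform_def algebra_simps sum_subtractf)

lemma qform_pair:
  fixes M :: "('a::finite \<times> 'b::finite) op"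
  shows "qform M v = (\<Sum>a\<in>UNIV. \<Sum>y\<in>UNIV. \<Sum>c\<in>UNIV. \<Sum>y'\<in>UNIV.
    cnj (v (a, y)) * M (a, y) (c, y') * v (c, y'))"
  by (simp add: qform_def sum_UNIV_prod)

lemma qform_idA_tensor:
  fixes \<sigma> :: "'b::finite op" and v :: "'a::finite \<times> 'b \<Rightarrow> complex"
  shows "qform (idA_tensor \<sigma>) v
    = (\<Sum>a\<in>UNIV. \<Sum>y\<in>UNIV. \<Sum>y'\<in>UNIV. cnj (v (a, y)) * \<sigma> y y' * v (a, y'))"
proof -
  have "\<And>a y c y'. cnj (v (a, y)) * (if a = c then \<sigma> y y' else 0) * v (c, y')
      = (if c = a then cnj (v (a, y)) * \<sigma> y y' * v (a, y') else 0)"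
    by simp
  then show ?thesis
    by (simp add: qform_pair idA_tensor_def sum.swap[where A = "UNIV::'a set"])
qed

definition basis_tensor :: "'a \<Rightarrow> ('b \<Rightarrow> complex) \<Rightarrow> ('a \<times> 'b \<Rightarrow> complex)" where
  "basis_tensor p u = (\<lambda>(x, y). if x = p then u y else 0)"

lemma sesq_form_ptransB_basis_tensor:
  fixes \<rho> :: "('a::finite \<times> 'b::finite) op"
  shows "sesq_form (ptransB \<rho>) (basis_tensor p u) (basis_tensor q w)
    = (\<Sum>y\<in>UNIV. \<Sum>y'\<in>UNIV. cnj (u y) * \<rho> (p, y') (q, y) * w y')"
proof -
  have "\<And>x y x' y'.
      cnj (if x = p then u y else 0) * \<rho> (x, y') (x', y) * (if x' = q then w y' else 0)
      = (if x = p then if x' = q then cnj (u y) * \<rho> (p, y') (q, y) * w y' else 0 else 0)"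
    by simp
  then show ?thesis
    by (simp add: sesq_form_def sum_UNIV_prod ptransB_def basis_tensor_def
        sum.swap[where A = "UNIV::'a set"])
qed

lemma sum_qform_ptransB_antisym:
  fixes \<rho> :: "('a::finite \<times> 'b::finite) op" and v :: "'a \<times> 'b \<Rightarrow> complex"
  defines "w a c \<equiv>
    \<lambda>i. basis_tensor c (\<lambda>y. cnj (v (a, y))) i - basis_tensor a (\<lambda>y. cnj (v (c, y))) i"
  shows "(\<Sum>a\<in>UNIV. \<Sum>c\<in>UNIV. qform (ptransB \<rho>) (w a c))
    = 2 * (qform (idA_tensor (ptraceA \<rho>)) v - qform \<rho> v)"
proof -
  define T where
    "T p q a c = (\<Sum>y\<in>UNIV. \<Sum>y'\<in>UNIV. v (a, y) * \<rho> (p, y') (q, y) * cnj (v (c, y')))"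
    for p q a c
  have "qform (ptransB \<rho>) (w a c) = T c c a a - T c a a c - T a c c a + T a a c c" for a c
    by (simp add: w_def qform_diff_vec qform_eq_sesq_form sesq_form_ptransB_basis_tensor T_def
        mult.commute)
  then have "(\<Sum>a\<in>UNIV. \<Sum>c\<in>UNIV. qform (ptransB \<rho>) (w a c))
      = (\<Sum>a\<in>UNIV. \<Sum>c\<in>UNIV. T c c a a) - (\<Sum>a\<in>UNIV. \<Sum>c\<in>UNIV. T c a a c)
        - (\<Sum>a\<in>UNIV. \<Sum>c\<in>UNIV. T a c c a) + (\<Sum>a\<in>UNIV. \<Sum>c\<in>UNIV. T a a c c)"
    by (simp add: sum_subtractf sum.distrib)
  also have "(\<Sum>a\<in>UNIV. \<Sum>c\<in>UNIV. T a a c c) = (\<Sum>a\<in>UNIV. \<Sum>c\<in>UNIV. T c c a a)"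
    by (rule sum.swap)
  also have "(\<Sum>a\<in>UNIV. \<Sum>c\<in>UNIV. T a c c a) = (\<Sum>a\<in>UNIV. \<Sum>c\<in>UNIV. T c a a c)"
    by (rule sum.swap)
  also have "(\<Sum>a\<in>UNIV. \<Sum>c\<in>UNIV. T c c a a) = qform (idA_tensor (ptraceA \<rho>)) v"
  proof -
    have "(\<Sum>c\<in>UNIV. T c c a a)
        = (\<Sum>y\<in>UNIV. \<Sum>y'\<in>UNIV. cnj (v (a, y)) * ptraceA \<rho> y y' * v (a, y'))" for a
      unfolding T_def ptraceA_def sum_distrib_left sum_distrib_right
      by (rule trans[OF sum_rotate3], rule trans[OF sum.swap]) (simp add: mult_ac)
    then show ?thesis
      by (simp add: qform_idA_tensor)
  qed
  also have "(\<Sum>a\<in>UNIV. \<Sum>c\<in>UNIV. T c a a c) = qform \<rho> v"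
    unfolding qform_pair T_def
    by (rule trans[OF sum.swap], rule sum.cong[OF refl], rule trans[OF sum_rotate3[symmetric]])
      (simp add: mult_ac)
  finally show ?thesis
    by simp
qed

lemma PPT_imp_loewner_le_idA_tensor_ptraceA:
  fixes \<rho> :: "('a::finite \<times> 'b::finite) op"
  assumes "PPT \<rho>"
  shows "loewner_le \<rho> (idA_tensor (ptraceA \<rho>))"
  unfolding loewner_le_def psd_def qform_diff_op
proof
  fix v :: "'a \<times> 'b \<Rightarrow> complex"
  define Z where "Z = (\<Sum>a\<in>UNIV. \<Sum>c\<in>UNIV. qform (ptransB \<rho>)
    (\<lambda>i. basis_tensor c (\<lambda>y. cnj (v (a, y))) i - basis_tensor a (\<lambda>y. cnj (v (c, y))) i))"
  have "Im (qform (ptransB \<rho>) u) = 0" "0 \<le> Re (qform (ptransB \<rho>) u)" for u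
    using assms by (simp_all add: PPT_def psd_def)
  then have "Im Z = 0" "0 \<le> Re Z"
    by (simp_all add: Z_def Im_sum Re_sum sum_nonneg)
  moreover have "Z = 2 * (qform (idA_tensor (ptraceA \<rho>)) v - qform \<rho> v)"
    unfolding Z_def by (rule sum_qform_ptransB_antisym)
  ultimately show "Im (qform (idA_tensor (ptraceA \<rho>)) v - qform \<rho> v) = 0
    \<and> 0 \<le> Re (qform (idA_tensor (ptraceA \<rho>)) v - qform \<rho> v)"
    by simp
qed

lemma D_max_nonpos_if_loewner_le:
  assumes "loewner_le \<rho> \<sigma>"
  shows "D_max \<rho> \<sigma> \<le> 0"
proof -
  define L where "L = {t::real. t \<ge> 0 \<and> loewner_le \<rho> (\<lambda>i j. complex_of_real t * \<sigma> i j)}"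
  have "1 \<in> L"
    using assms by (simp add: L_def)
  moreover have "bdd_below L"
    unfolding L_def by (rule bdd_belowI[of _ 0]) simp
  ultimately have "Inf L \<le> 1"
    by (rule cInf_lower)
  moreover have "L \<noteq> {}"
    using \<open>1 \<in> L\<close> by blast
  moreover from this have "0 \<le> Inf L"
    by (rule cInf_greatest) (simp add: L_def)
  ultimately show ?thesis
    unfolding D_max_def Let_def L_def[symmetric] by auto
qed

theorem mainTheorem16:
  fixes \<rho> :: "('a::finite \<times> 'b::finite) op"
  assumes "density_op \<rho>" and "PPT \<rho>"
  shows "S_down_inf \<rho> \<ge> 0"
  using D_max_nonpos_if_loewner_le[OF PPT_imp_loewner_le_idA_tensor_ptraceA[OF assms(2)]]
  by (simp add: S_down_inf_def)

end
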